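(* Let $G$ be a regular bipartite Tanner graph with girth $g$ and smallest left (variable-node) degree $d$. Then the minimum pseudocodeword weights of $G$ on the BSC and on the AWGN channel, $w^{BSC}_{\min}$ and $w^{AWGN}_{\min}$, each satisfy \[ w_{\min} \ge \begin{cases} 1+d+d(d-1)+\cdots+d(d-1)^{\frac{g-6}{4}}, & \frac{g}{2}\text{ odd},\\ 1+d+d(d-1)+\cdots+d(d-1)^{\frac{g-8}{4}}+(d-1)^{\frac{g-4}{4}}, & \frac{g}{2}\text{ even}.\end{cases}\]
   Context: A Tanner graph $G$ is a finite bipartite graph with variable (left) nodes $v_1,\dots,v_n$ and check (right) nodes $u_1,\dots,u_m$; it defines the binary code $\mathcal{C}$ of all $x\in\{0,1\}^n$ such that every check node has an even number of neighbours $v_i$ with $x_i=1$. A degree-$\ell$ lift (cover) $\hat G$ of $G$ replaces each node $x$ of $G$ by a cloud of $\ell$ copies, and for each edge $(x,y)$ of $G$ places $\ell$ edges between the clouds of $x$ and $y$ forming a perfect matching; $\hat G$ is again a Tanner graph. A (lift-realizable) pseudocodeword of $G$ is a vector $p=(p_1,\dots,p_n)$ of nonnegative integers obtained from a codeword of the code of some finite-degree lift $\hat G$ by letting $p_i$ be the number of copies of $v_i$ assigned value 1. For a nonzero pseudocodeword $p$, let $e$ be the smallest number such that the sum of the $e$ largest $p_i$ is at least $\frac12\sum_i p_i$; then $w^{BSC}(p)=2e$ if this sum equals $\frac12\sum_ip_i$ and $w^{BSC}(p)=2e-1$ if it is strictly larger; and $w^{AWGN}(p)=(\sum_i p_i)^2/\sum_i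 p_i^2$. $w^{BSC}_{\min}$ (resp. $w^{AWGN}_{\min}$) is the minimum of $w^{BSC}(p)$ (resp. $w^{AWGN}(p)$) over all nonzero lift-realizable pseudocodewords $p$ of $G$. *)

theory Defs
  imports Complex_Main
begin

text \<open>A Tanner graph is given by n variable nodes 0..n-1, m check nodes 0..m-1 and an
edge set E (pairs (variable, check)).\<close>

definition tanner_graph :: "nat \<Rightarrow> nat \<Rightarrow> (nat \<times> nat) set \<Rightarrow> bool" where
  "tanner_graph n m E \<longleftrightarrow> E \<subseteq> {..<n} \<times> {..<m}"

definition vdeg :: "(nat \<times> nat) set \<Rightarrow> nat \<Rightarrow> nat" where
  "vdeg E i = card {j. (i, j) \<in> E}"

definition cdeg :: "(nat \<times> nat) set \<Rightarrow> nat \<Rightarrow> nat" where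
  "cdeg E j = card {i. (i, j) \<in> E}"

text \<open>A cycle of length 2t: v_0 c_0 v_1 c_1 ... v_{t-1} c_{t-1} v_0, all nodes distinct.\<close>
definition has_cycle :: "nat \<Rightarrow> nat \<Rightarrow> (nat \<times> nat) set \<Rightarrow> nat \<Rightarrow> bool" where
  "has_cycle n m E t \<longleftrightarrow> t \<ge> 2 \<and> (\<exists>vs cs :: nat \<Rightarrow> nat.
      inj_on vs {..<t} \<and> inj_on cs {..<t} \<and>
      (\<forall>k<t. vs k < n \<and> cs k < m \<and> (vs k, cs k) \<in> E \<and> (vs ((k + 1) mod t), cs k) \<in> E))"

definition has_girth :: "nat \<Rightarrow> nat \<Rightarrow> (nat \<times> nat) set \<Rightarrow> nat \<Rightarrow> bool" where
  "has_girth n m E g \<longleftrightarrow> (\<exists>t. g = 2 * t \<and> has_cycle n m E t) \<and>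
      (\<forall>t. has_cycle n m E t \<longrightarrow> g \<le> 2 * t)"

text \<open>Codeword of the degree-l lift determined by the matchings \<pi> i j (a bijection of the
clouds {..<l} for each edge (i,j)): copy a of v_i is joined to copy (\<pi> i j a) of u_j.\<close>
definition lift_perms :: "nat \<Rightarrow> (nat \<times> nat) set \<Rightarrow> (nat \<Rightarrow> nat \<Rightarrow> nat \<Rightarrow> nat) \<Rightarrow> bool" where
  "lift_perms l E \<pi> \<longleftrightarrow> (\<forall>(i, j) \<in> E. bij_betw (\<pi> i j) {..<l} {..<l})"

definition lift_codeword :: "nat \<Rightarrow> nat \<Rightarrow> nat \<Rightarrow> (nat \<times> nat) set \<Rightarrow>
    (nat \<Rightarrow> nat \<Rightarrow> nat \<Rightarrow> nat) \<Rightarrow> (nat \<Rightarrow> nat \<Rightarrow> bool) \<Rightarrow> bool" where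
  "lift_codeword n m l E \<pi> x \<longleftrightarrow>
     (\<forall>j<m. \<forall>b<l. even (card {(i, a). (i, j) \<in> E \<and> a < l \<and> \<pi> i j a = b \<and> x i a}))"

definition pseudocodeword :: "nat \<Rightarrow> nat \<Rightarrow> (nat \<times> nat) set \<Rightarrow> (nat \<Rightarrow> nat) \<Rightarrow> bool" where
  "pseudocodeword n m E p \<longleftrightarrow> (\<exists>l \<pi> x. l \<ge> 1 \<and> lift_perms l E \<pi> \<and>
      lift_codeword n m l E \<pi> x \<and> (\<forall>i<n. p i = card {a. a < l \<and> x i a}))"

definition top_sum :: "nat \<Rightarrow> (nat \<Rightarrow> nat) \<Rightarrow> nat \<Rightarrow> nat" where
  "top_sum n p e = Max {(\<Sum>i\<in>I. p i) | I. I \<subseteq> {..<n} \<and> card I = e}"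

definition w_bsc :: "nat \<Rightarrow> (nat \<Rightarrow> nat) \<Rightarrow> real" where
  "w_bsc n p = (let S = (\<Sum>i<n. p i);
                    e = (LEAST e. 2 * top_sum n p e \<ge> S)
                in if 2 * top_sum n p e = S then real (2 * e) else real (2 * e) - 1)"

definition w_awgn :: "nat \<Rightarrow> (nat \<Rightarrow> nat) \<Rightarrow> real" where
  "w_awgn n p = (real (\<Sum>i<n. p i))^2 / real (\<Sum>i<n. (p i)^2)"

definition girth_bound :: "nat \<Rightarrow> nat \<Rightarrow> real" where
  "girth_bound d g =
    (if odd (g div 2)
     then 1 + (\<Sum>k=0..(g - 6) div 4. real d * (real d - 1) ^ k)
     else 1 + (\<Sum>k\<in>{0..<(g - 4) div 4}. real d * (real d - 1) ^ k) + (real d - 1) ^ ((g - 4) div 4))"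

end

theory Submission
  imports Defs
begin

(* Let v be a variable node where the pseudocodeword p is maximal, p v = M. Every lifted check
   has even parity, so for each edge (i, j) the entry p i is at most the sum of p over the other
   neighbours of u_j. Unrolling the graph from v along non-backtracking paths, the entries at the
   endpoints of the paths of length k + 1 therefore add up to at least d (d - 1)^k M. Two distinct
   such paths of lengths a and b with a common endpoint close a cycle of length at most 2a + 2b,
   so all paths of length at most K end at distinct nodes when 4K < g; when g = 4(K + 1), each
   node is moreover the endpoint of at most d paths of length K + 1. Hence sum p >= B M for the
   bound B of the theorem, and both weights are at least (sum p) / M: for the AWGN weight because
   sum p^2 <= M sum p, for the BSC weight because any e entries add up to at most e M. *)

definition tanner_adj :: "(nat \<times> nat) set \<Rightarrow> nat + nat \<Rightarrow> nat + nat \<Rightarrow> bool" where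
  "tanner_adj E x y \<longleftrightarrow>
     (\<exists>i j. (i, j) \<in> E \<and> (x = Inl i \<and> y = Inr j \<or> x = Inr j \<and> y = Inl i))"

lemma tanner_adj_simps [simp]:
  "tanner_adj E (Inl i) (Inr j) \<longleftrightarrow> (i, j) \<in> E"
  "tanner_adj E (Inr j) (Inl i) \<longleftrightarrow> (i, j) \<in> E"
  "\<not> tanner_adj E (Inl i) (Inl i')"
  "\<not> tanner_adj E (Inr j) (Inr j')"
  unfolding tanner_adj_def by auto

lemma tanner_adj_sym: "tanner_adj E x y \<Longrightarrow> tanner_adj E y x"
  unfolding tanner_adj_def by blast

lemma tanner_adj_isl: "tanner_adj E x y \<Longrightarrow> isl y \<longleftrightarrow> \<not> isl x"
  unfolding tanner_adj_def by auto

definition walk :: "(nat \<times> nat) set \<Rightarrow> (nat \<Rightarrow> nat + nat) \<Rightarrow> nat \<Rightarrow> bool" where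
  "walk E w l \<longleftrightarrow> (\<forall>j<l. tanner_adj E (w j) (w (Suc j)))"

definition nb_walk :: "(nat \<times> nat) set \<Rightarrow> (nat \<Rightarrow> nat + nat) \<Rightarrow> nat \<Rightarrow> bool" where
  "nb_walk E w l \<longleftrightarrow> walk E w l \<and> (\<forall>j. Suc j < l \<longrightarrow> w j \<noteq> w (Suc (Suc j)))"

lemma walk_isl:
  assumes "walk E w l" "j \<le> l"
  shows "isl (w j) \<longleftrightarrow> (isl (w 0) \<longleftrightarrow> even j)"
  using assms(2)
proof (induction j)
  case (Suc j)
  then have "tanner_adj E (w j) (w (Suc j))"
    using assms(1) unfolding walk_def by simp
  then show ?case
    using Suc tanner_adj_isl by simp
qed simp

lemma closed_walk_even: "walk E w l \<Longrightarrow> w 0 = w l \<Longrightarrow> even l"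
  using walk_isl[of E w l l] by auto

lemma closed_walk_rotate:
  assumes w: "walk E w l" "w 0 = w l" "inj_on w {..<l}" and l: "0 < l"
  defines "w' \<equiv> \<lambda>k. w (if k < l then Suc k else 1)"
  shows "walk E w' l" "w' 0 = w' l" "inj_on w' {..<l}" "w' 0 = w 1"
proof -
  show "walk E w' l"
    using w(1) unfolding walk_def w'_def
    by (metis (full_types) Suc_lessI l less_irrefl_nat w(2) One_nat_def)
  show "w' 0 = w' l" "w' 0 = w 1"
    using l unfolding w'_def by auto
  have w'_eq: "w' k = w (if Suc k < l then Suc k else 0)" if "k < l" for k
    using that w(2) unfolding w'_def by (cases "Suc k = l") auto
  show "inj_on w' {..<l}"
  proof (rule inj_onI)
    fix a b assume "a \<in> {..<l}" "b \<in> {..<l}" "w' a = w' b"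
    then have "(if Suc a < l then Suc a else 0) = (if Suc b < l then Suc b else 0)"
      using w'_eq inj_onD[OF w(3)] l by (simp del: One_nat_def)
    then show "a = b"
      using \<open>a \<in> {..<l}\<close> \<open>b \<in> {..<l}\<close> by (auto split: if_splits)
  qed
qed

lemma nb_walk_shift:
  "nb_walk E w l \<Longrightarrow> i \<le> j \<Longrightarrow> j \<le> l \<Longrightarrow> nb_walk E (\<lambda>k. w (i + k)) (j - i)"
  unfolding nb_walk_def walk_def by auto

lemma nb_walk_mono: "nb_walk E w l \<Longrightarrow> l' \<le> l \<Longrightarrow> nb_walk E w l'"
  unfolding nb_walk_def walk_def by auto

lemma nb_walk_rev:
  assumes w: "nb_walk E w l"
  shows "nb_walk E (\<lambda>k. w (l - k)) l"
  unfolding nb_walk_def walk_def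
proof (intro conjI allI impI)
  fix j assume "j < l"
  then have "tanner_adj E (w (l - Suc j)) (w (Suc (l - Suc j)))"
    using w unfolding nb_walk_def walk_def by simp
  then show "tanner_adj E (w (l - j)) (w (l - Suc j))"
    using \<open>j < l\<close> by (simp add: Suc_diff_Suc tanner_adj_sym)
next
  fix j assume "Suc j < l"
  then have "w (l - Suc (Suc j)) \<noteq> w (Suc (Suc (l - Suc (Suc j))))"
    using w unfolding nb_walk_def by simp
  then show "w (l - j) \<noteq> w (l - Suc (Suc j))"
    using \<open>Suc j < l\<close> by (simp add: Suc_diff_Suc)
qed

lemma nb_walk_append:
  assumes "nb_walk E w1 l1" "nb_walk E w2 l2" "w1 l1 = w2 0"
    and "0 < l1 \<Longrightarrow> 0 < l2 \<Longrightarrow> w1 (l1 - 1) \<noteq> w2 1"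
  shows "nb_walk E (\<lambda>k. if k \<le> l1 then w1 k else w2 (k - l1)) (l1 + l2)"
  unfolding nb_walk_def walk_def
proof (intro conjI allI impI)
  fix j assume "j < l1 + l2"
  then show "tanner_adj E (if j \<le> l1 then w1 j else w2 (j - l1))
      (if Suc j \<le> l1 then w1 (Suc j) else w2 (Suc j - l1))"
    using assms(1-3) unfolding nb_walk_def walk_def
    by (cases "j < l1"; cases "j = l1") (auto simp: Suc_diff_le)
next
  fix j assume "Suc j < l1 + l2"
  then show "(if j \<le> l1 then w1 j else w2 (j - l1)) \<noteq>
      (if Suc (Suc j) \<le> l1 then w1 (Suc (Suc j)) else w2 (Suc (Suc j) - l1))"
    using assms unfolding nb_walk_def
    by (cases "Suc (Suc j) \<le> l1"; cases "Suc j = l1"; cases "j = l1") (auto simp: Suc_diff_le)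
qed

definition cons_walk :: "'a \<Rightarrow> (nat \<Rightarrow> 'a) \<Rightarrow> nat \<Rightarrow> 'a" where
  "cons_walk x w k = (if k = 0 then x else w (k - 1))"

lemma nb_walk_cons:
  assumes "nb_walk E w l" "tanner_adj E x (w 0)" "0 < l \<Longrightarrow> x \<noteq> w 1"
  shows "nb_walk E (cons_walk x w) (Suc l)"
  unfolding nb_walk_def walk_def
proof (intro conjI allI impI)
  fix j assume "j < Suc l"
  then show "tanner_adj E (cons_walk x w j) (cons_walk x w (Suc j))"
    using assms unfolding nb_walk_def walk_def cons_walk_def by (cases j) auto
next
  fix j assume "Suc j < Suc l"
  then show "cons_walk x w j \<noteq> cons_walk x w (Suc (Suc j))"
    using assms unfolding nb_walk_def cons_walk_def by (cases j) auto
qed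

(* A path from variable node u is the list of its steps (check, next variable); c is the check
   through which u was entered, which the first step may not reuse. At the root c = m is used,
   which is no check node. *)

fun nb_path :: "(nat \<times> nat) set \<Rightarrow> nat \<Rightarrow> nat \<Rightarrow> (nat \<times> nat) list \<Rightarrow> bool" where
  "nb_path E u c [] \<longleftrightarrow> True"
| "nb_path E u c ((c', v) # P) \<longleftrightarrow>
     (u, c') \<in> E \<and> (v, c') \<in> E \<and> c' \<noteq> c \<and> v \<noteq> u \<and> nb_path E v c' P"

definition path_end :: "nat \<Rightarrow> (nat \<times> nat) list \<Rightarrow> nat" where
  "path_end u P = last (u # map snd P)"

lemma path_end_simps [simp]:
  "path_end u [] = u"
  "path_end u ((c, v) # P) = path_end v P"
  unfolding path_end_def by simp_all

lemma path_end_last: "P \<noteq> [] \<Longrightarrow> path_end u P = snd (last P)"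
  unfolding path_end_def by (simp add: last_map)

lemma nb_path_edges: "nb_path E u c P \<Longrightarrow> (c', v) \<in> set P \<Longrightarrow> (v, c') \<in> E"
  by (induction E u c P rule: nb_path.induct) auto

fun path_walk :: "nat \<Rightarrow> (nat \<times> nat) list \<Rightarrow> nat \<Rightarrow> nat + nat" where
  "path_walk u [] = (\<lambda>_. Inl u)"
| "path_walk u ((c, v) # P) = cons_walk (Inl u) (cons_walk (Inr c) (path_walk v P))"

lemma path_walk_0 [simp]: "path_walk u P 0 = Inl u"
  by (cases P) (auto simp: cons_walk_def)

lemma path_walk_nth:
  "j < length P \<Longrightarrow>
    path_walk u P (Suc (2 * j)) = Inr (fst (P ! j)) \<and> path_walk u P (2 * Suc j) = Inl (snd (P ! j))"
proof (induction u P arbitrary: j rule: path_walk.induct)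
  case (2 u c v P)
  then show ?case by (cases j) (auto simp: cons_walk_def)
qed simp

lemma path_walk_end: "path_walk u P (2 * length P) = Inl (path_end u P)"
  by (induction u P rule: path_walk.induct) (auto simp: cons_walk_def)

lemma nb_path_walk: "nb_path E u c P \<Longrightarrow> nb_walk E (path_walk u P) (2 * length P)"
proof (induction E u c P rule: nb_path.induct)
  case (1 E u c)
  then show ?case unfolding nb_walk_def walk_def by simp
next
  case (2 E u c c' v P)
  have "Inr c' \<noteq> path_walk v P 1" if "0 < 2 * length P"
    using 2(2) that by (cases P) (auto simp: cons_walk_def)
  then have "nb_walk E (cons_walk (Inr c') (path_walk v P)) (Suc (2 * length P))"
    using 2 by (intro nb_walk_cons) auto
  then have "nb_walk E (cons_walk (Inl u) (cons_walk (Inr c') (path_walk v P)))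
      (Suc (Suc (2 * length P)))"
    by (rule nb_walk_cons) (use 2(2) in \<open>auto simp: cons_walk_def\<close>)
  then show ?case by simp
qed

lemma path_walks_differ:
  assumes "j < length P1" "j < length P2" "P1 ! j \<noteq> P2 ! j"
  shows "\<exists>i\<le>2 * Suc j. path_walk u P1 i \<noteq> path_walk u P2 i"
proof (cases "fst (P1 ! j) = fst (P2 ! j)")
  case True
  then have "snd (P1 ! j) \<noteq> snd (P2 ! j)" using assms(3) by (simp add: prod_eq_iff)
  then show ?thesis
    using path_walk_nth[OF assms(1), of u] path_walk_nth[OF assms(2), of u]
    by (intro exI[of _ "2 * Suc j"]) auto
next
  case False
  then show ?thesis
    using path_walk_nth[OF assms(1), of u] path_walk_nth[OF assms(2), of u]
    by (intro exI[of _ "Suc (2 * j)"]) auto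
qed

lemma finite_edge_slices:
  assumes "finite E"
  shows "finite {c. (v, c) \<in> E}" "finite {v. (v, c) \<in> E}"
  using finite_imageI[OF assms, of snd] finite_imageI[OF assms, of fst]
  by (auto elim!: finite_subset[rotated] intro: rev_image_eqI)

definition nb_paths :: "(nat \<times> nat) set \<Rightarrow> nat \<Rightarrow> nat \<Rightarrow> nat \<Rightarrow> (nat \<times> nat) list set" where
  "nb_paths E k u c = {P. length P = k \<and> nb_path E u c P}"

definition level_sum :: "(nat \<times> nat) set \<Rightarrow> (nat \<Rightarrow> nat) \<Rightarrow> nat \<Rightarrow> nat \<Rightarrow> nat \<Rightarrow> nat" where
  "level_sum E p k u c = (\<Sum>P\<in>nb_paths E k u c. p (path_end u P))"

lemma finite_short_nb_paths:
  assumes "finite E"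
  shows "finite {P. length P \<le> k \<and> nb_path E u c P}"
proof (rule finite_subset)
  show "{P. length P \<le> k \<and> nb_path E u c P} \<subseteq> {P. set P \<subseteq> prod.swap ` E \<and> length P \<le> k}"
    using nb_path_edges by fastforce
  show "finite {P. set P \<subseteq> prod.swap ` E \<and> length P \<le> k}"
    using assms by (intro finite_lists_length_le) simp
qed

lemma finite_nb_paths: "finite E \<Longrightarrow> finite (nb_paths E k u c)"
  unfolding nb_paths_def
  by (rule finite_subset[OF _ finite_short_nb_paths[of E k u c]]) auto

lemma level_sum_0 [simp]: "level_sum E p 0 u c = p u"
proof -
  have "nb_paths E 0 u c = {[]}" unfolding nb_paths_def by auto
  then show ?thesis unfolding level_sum_def by simp
qed

lemma level_sum_Suc:
  assumes "finite E"
  shows "level_sum E p (Suc k) u c =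
    (\<Sum>c'\<in>{c'. (u, c') \<in> E \<and> c' \<noteq> c}. \<Sum>v\<in>{v. (v, c') \<in> E \<and> v \<noteq> u}. level_sum E p k v c')"
proof -
  define S where "S = (SIGMA c':{c'. (u, c') \<in> E \<and> c' \<noteq> c}. {v. (v, c') \<in> E \<and> v \<noteq> u})"
  have fin_checks: "finite {c'. (u, c') \<in> E \<and> c' \<noteq> c}"
    using finite_edge_slices(1)[OF assms] by simp
  have fin_vars: "finite {v. (v, c') \<in> E \<and> v \<noteq> u}" for c'
    using finite_edge_slices(2)[OF assms] by simp
  have "finite S" unfolding S_def using fin_checks fin_vars by blast
  define T where "T = (SIGMA q:S. nb_paths E k (snd q) (fst q))"
  have paths: "nb_paths E (Suc k) u c = (\<lambda>(q, P). q # P) ` T"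
    unfolding nb_paths_def S_def T_def by (auto simp: length_Suc_conv image_iff)
  have inj: "inj_on (\<lambda>(q, P). q # P) T"
    by (auto simp: inj_on_def)
  have "level_sum E p (Suc k) u c = (\<Sum>(q, P)\<in>T. p (path_end u (q # P)))"
    unfolding level_sum_def paths sum.reindex[OF inj] by (simp add: comp_def case_prod_beta)
  also have "\<dots> = (\<Sum>q\<in>S. \<Sum>P\<in>nb_paths E k (snd q) (fst q). p (path_end u (q # P)))"
    unfolding T_def using \<open>finite S\<close> finite_nb_paths[OF assms] by (subst sum.Sigma) auto
  also have "\<dots> = (\<Sum>q\<in>S. level_sum E p k (snd q) (fst q))"
    unfolding level_sum_def by (intro sum.cong) (auto simp: prod.case_eq_if)
  also have "\<dots> = (\<Sum>c'\<in>{c'. (u, c') \<in> E \<and> c' \<noteq> c}.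
      \<Sum>v\<in>{v. (v, c') \<in> E \<and> v \<noteq> u}. level_sum E p k v c')"
    unfolding S_def using fin_checks fin_vars by (subst sum.Sigma) (auto simp: case_prod_beta)
  finally show ?thesis .
qed

lemma sum_levels_eq_sum_short_paths:
  assumes "finite E"
  shows "(\<Sum>k\<le>K. level_sum E p k u c) = (\<Sum>P\<in>{P. length P \<le> K \<and> nb_path E u c P}. p (path_end u P))"
proof -
  have "{P. length P \<le> K \<and> nb_path E u c P} = (\<Union>k\<le>K. nb_paths E k u c)"
    unfolding nb_paths_def by auto
  moreover have "(\<Sum>P\<in>(\<Union>k\<le>K. nb_paths E k u c). p (path_end u P)) =
      (\<Sum>k\<le>K. level_sum E p k u c)"
    unfolding level_sum_def
    by (subst sum.UNION_disjoint)
      (auto simp: finite_nb_paths[OF assms, unfolded nb_paths_def] nb_paths_def)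
  ultimately show ?thesis by simp
qed

locale tanner =
  fixes n m :: nat and E :: "(nat \<times> nat) set"
  assumes edges: "E \<subseteq> {..<n} \<times> {..<m}"
begin

lemma closed_walk_from_variable_has_cycle:
  assumes w: "walk E w (2 * t)" "w 0 = w (2 * t)" "inj_on w {..<2 * t}" "isl (w 0)"
    and t: "2 \<le> t"
  shows "has_cycle n m E t"
proof -
  define vs where "vs k = projl (w (2 * k))" for k
  define cs where "cs k = projr (w (Suc (2 * k)))" for k
  have vs: "w (2 * k) = Inl (vs k)" if "k \<le> t" for k
    using walk_isl[OF w(1), of "2 * k"] that w(4) unfolding vs_def by (cases "w (2 * k)") auto
  have cs: "w (Suc (2 * k)) = Inr (cs k)" if "k < t" for k
    using walk_isl[OF w(1), of "Suc (2 * k)"] that w(4) unfolding cs_def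
    by (cases "w (Suc (2 * k))") auto
  have vs_wrap: "vs ((k + 1) mod t) = vs (Suc k)" if "k < t" for k
    using that w(2) unfolding vs_def by (cases "Suc k = t") auto
  have adj: "tanner_adj E (w j) (w (Suc j))" if "j < 2 * t" for j
    using w(1) that unfolding walk_def by blast
  have edge1: "(vs k, cs k) \<in> E" if "k < t" for k
    using adj[of "2 * k"] vs[of k] cs[of k] that by simp
  have edge2: "(vs ((k + 1) mod t), cs k) \<in> E" if "k < t" for k
    using adj[of "Suc (2 * k)"] vs[of "Suc k"] cs[of k] vs_wrap[of k] that by simp
  have "inj_on vs {..<t}"
  proof (rule inj_onI)
    fix a b assume "a \<in> {..<t}" "b \<in> {..<t}" "vs a = vs b"
    then have "w (2 * a) = w (2 * b)" using vs by simp
    then show "a = b"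
      using inj_onD[OF w(3), of "2 * a" "2 * b"] \<open>a \<in> {..<t}\<close> \<open>b \<in> {..<t}\<close> by simp
  qed
  moreover have "inj_on cs {..<t}"
  proof (rule inj_onI)
    fix a b assume "a \<in> {..<t}" "b \<in> {..<t}" "cs a = cs b"
    then have "w (Suc (2 * a)) = w (Suc (2 * b))" using cs by simp
    then show "a = b"
      using inj_onD[OF w(3), of "Suc (2 * a)" "Suc (2 * b)"] \<open>a \<in> {..<t}\<close> \<open>b \<in> {..<t}\<close>
      by simp
  qed
  ultimately show ?thesis
    unfolding has_cycle_def using t edge1 edge2 edges by blast
qed

lemma injective_closed_nb_walk_has_cycle:
  assumes w: "nb_walk E w l" "w 0 = w l" "inj_on w {..<l}" and l: "0 < l"
  shows "has_cycle n m E (l div 2)"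
proof -
  have walk: "walk E w l"
    using w(1) unfolding nb_walk_def by simp
  have "even l" using closed_walk_even[OF walk w(2)] .
  moreover have "l \<noteq> 2" using w(1,2) unfolding nb_walk_def numeral_2_eq_2 by auto
  ultimately obtain t where lt: "l = 2 * t" and t: "2 \<le> t" using l by (elim evenE) auto
  show ?thesis
  proof (cases "isl (w 0)")
    case True
    then show ?thesis using closed_walk_from_variable_has_cycle[of w t] walk w lt t by simp
  next
    case False
    then have "isl (w 1)" using tanner_adj_isl walk l unfolding walk_def by auto
    then show ?thesis
      using closed_walk_from_variable_has_cycle closed_walk_rotate[OF walk w(2,3) l] lt t by simp
  qed
qed

lemma closed_nb_walk_has_short_cycle:
  "nb_walk E w l \<Longrightarrow> w 0 = w l \<Longrightarrow> 0 < l \<Longrightarrow> \<exists>t. has_cycle n m E t \<and> 2 * t \<le> l"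
proof (induction l arbitrary: w rule: less_induct)
  case (less l)
  show ?case
  proof (cases "inj_on w {..<l}")
    case True
    then show ?thesis
      using injective_closed_nb_walk_has_cycle less.prems by (intro exI[of _ "l div 2"]) auto
  next
    case False
    then obtain i j where "i < j" "j < l" "w i = w j"
      unfolding inj_on_def by (metis lessThan_iff linorder_neqE_nat)
    then show ?thesis
      using less.IH[of "j - i" "\<lambda>k. w (i + k)"] nb_walk_shift[OF less.prems(1), of i j] by force
  qed
qed

lemma girth_le_closed_nb_walk:
  assumes "has_girth n m E g" "nb_walk E w l" "w 0 = w l" "0 < l"
  shows "g \<le> l"
  using closed_nb_walk_has_short_cycle[OF assms(2-4)] assms(1) unfolding has_girth_def by force

lemma girth_le_joined_nb_walks:
  assumes G: "has_girth n m E g"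
    and w: "nb_walk E w1 (Suc a)" "nb_walk E w2 (Suc b)" "w1 0 = w2 0" "w1 (Suc a) = w2 (Suc b)"
    and last: "w1 a \<noteq> w2 b"
  shows "g \<le> Suc a + Suc b"
proof -
  let ?w = "\<lambda>k. if k \<le> Suc a then w1 k else w2 (Suc b - (k - Suc a))"
  have "nb_walk E ?w (Suc a + Suc b)"
    using nb_walk_append[OF w(1) nb_walk_rev[OF w(2)]] w(4) last by simp
  then show ?thesis
    using girth_le_closed_nb_walk[OF G, of ?w "Suc a + Suc b"] w(3) by simp
qed

lemma girth_le_diverging_nb_walks:
  assumes G: "has_girth n m E g"
  shows "nb_walk E w1 l1 \<Longrightarrow> nb_walk E w2 l2 \<Longrightarrow> w1 0 = w2 0 \<Longrightarrow> w1 l1 = w2 l2 \<Longrightarrow>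
    l1 \<noteq> l2 \<or> (\<exists>j\<le>l1. w1 j \<noteq> w2 j) \<Longrightarrow> g \<le> l1 + l2"
proof (induction l1 arbitrary: l2)
  case 0
  then show ?case using girth_le_closed_nb_walk[OF G, of w2 l2] by auto
next
  case (Suc a)
  show ?case
  proof (cases l2)
    case 0
    then show ?thesis using Suc.prems girth_le_closed_nb_walk[OF G, of w1 "Suc a"] by auto
  next
    case (Suc b)
    show ?thesis
    proof (cases "w1 a = w2 b")
      case True
      have "a \<noteq> b \<or> (\<exists>j\<le>a. w1 j \<noteq> w2 j)"
        using Suc.prems(4,5) \<open>l2 = Suc b\<close> by (auto simp: le_Suc_eq)
      then have "g \<le> a + b"
        using Suc.IH[of b] nb_walk_mono[OF Suc.prems(1), of a] nb_walk_mono[OF Suc.prems(2), of b]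
          Suc.prems(3) True \<open>l2 = Suc b\<close> by simp
      then show ?thesis using \<open>l2 = Suc b\<close> by simp
    next
      case False
      then show ?thesis
        using girth_le_joined_nb_walks[OF G Suc.prems(1)] Suc.prems(2-4) \<open>l2 = Suc b\<close> by simp
    qed
  qed
qed

lemma girth_le_nb_paths_same_end:
  assumes G: "has_girth n m E g" and P: "nb_path E u c P1" "nb_path E u c P2" "P1 \<noteq> P2"
    and same_end: "path_end u P1 = path_end u P2"
  shows "g \<le> 2 * length P1 + 2 * length P2"
proof -
  have "2 * length P1 \<noteq> 2 * length P2 \<or>
      (\<exists>i\<le>2 * length P1. path_walk u P1 i \<noteq> path_walk u P2 i)"
  proof (cases "length P1 = length P2")
    case True
    then obtain j where "j < length P1" "P1 ! j \<noteq> P2 ! j"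
      using P(3) nth_equalityI by blast
    then show ?thesis
      using path_walks_differ[of j P1 P2 u] True by (metis Suc_leI le_trans mult_le_mono2)
  qed simp
  then show ?thesis
    using girth_le_diverging_nb_walks[OF G nb_path_walk[OF P(1)] nb_path_walk[OF P(2)]]
      path_walk_end same_end by simp
qed

lemma girth_le_nb_paths_same_last_step:
  assumes G: "has_girth n m E g" and P: "nb_path E u c P1" "nb_path E u c P2" "P1 \<noteq> P2"
    and len: "length P1 = length P2" and last: "last P1 = last P2" and "P1 \<noteq> []"
  shows "g \<le> 4 * length P1 - 2"
proof -
  obtain k where k: "length P1 = Suc k" using \<open>P1 \<noteq> []\<close> by (cases P1) auto
  have last_nth: "P1 ! k = P2 ! k"
    using last k len by (metis last_conv_nth diff_Suc_1 length_0_conv nat.distinct(1))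
  obtain j where j: "j < length P1" "P1 ! j \<noteq> P2 ! j"
    using P(3) len nth_equalityI by blast
  then have "j < k" using k last_nth by (cases "j = k") auto
  moreover obtain i where "i \<le> 2 * Suc j" "path_walk u P1 i \<noteq> path_walk u P2 i"
    using path_walks_differ[of j P1 P2 u] j len by auto
  ultimately have "\<exists>i\<le>Suc (2 * k). path_walk u P1 i \<noteq> path_walk u P2 i"
    by (intro exI[of _ i]) auto
  moreover have "path_walk u P1 (Suc (2 * k)) = path_walk u P2 (Suc (2 * k))"
    using path_walk_nth[of k P1 u] path_walk_nth[of k P2 u] k len last_nth by simp
  moreover have "nb_walk E (path_walk u P1) (Suc (2 * k))"
    and "nb_walk E (path_walk u P2) (Suc (2 * k))"
    using nb_walk_mono[OF nb_path_walk[OF P(1)]] nb_walk_mono[OF nb_path_walk[OF P(2)]] k len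
    by simp_all
  ultimately have "g \<le> Suc (2 * k) + Suc (2 * k)"
    using girth_le_diverging_nb_walks[OF G] by (metis path_walk_0)
  then show ?thesis using k by simp
qed

lemma lift_codeword_partner:
  assumes perms: "lift_perms l E \<pi>" and x: "lift_codeword n m l E \<pi> x"
    and ij: "(i, j) \<in> E" and a: "a < l" "x i a"
  obtains i' a' where "(i', j) \<in> E" "i' \<noteq> i" "a' < l" "x i' a'" "\<pi> i' j a' = \<pi> i j a"
proof -
  have bij: "bij_betw (\<pi> i j) {..<l} {..<l}" using perms ij unfolding lift_perms_def by auto
  define b where "b = \<pi> i j a"
  define C where "C = {(i', a'). (i', j) \<in> E \<and> a' < l \<and> \<pi> i' j a' = b \<and> x i' a'}"
  have "b < l" using bij a unfolding b_def bij_betw_def by auto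
  moreover have "j < m" using ij edges by auto
  ultimately have "even (card C)" using x unfolding lift_codeword_def C_def by blast
  moreover have "finite C"
    by (rule finite_subset[of _ "{..<n} \<times> {..<l}"]) (use edges in \<open>auto simp: C_def\<close>)
  moreover have "(i, a) \<in> C" using ij a unfolding C_def b_def by simp
  ultimately have "C \<noteq> {(i, a)}" by auto
  then obtain i' a' where C: "(i', a') \<in> C" "(i', a') \<noteq> (i, a)"
    using \<open>(i, a) \<in> C\<close> by auto
  then have "\<pi> i' j a' = \<pi> i j a" "a' < l" using C unfolding C_def b_def by auto
  moreover from this have "i' \<noteq> i"
    using C(2) bij a unfolding bij_betw_def inj_on_def by auto
  ultimately show thesis using that C unfolding C_def by auto
qed

lemma pseudocodeword_local_ineq:
  assumes p: "pseudocodeword n m E p" and ij: "(i, j) \<in> E"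
  shows "p i \<le> (\<Sum>i'\<in>{i'. (i', j) \<in> E \<and> i' \<noteq> i}. p i')"
proof -
  obtain l \<pi> x where perms: "lift_perms l E \<pi>" and x: "lift_codeword n m l E \<pi> x"
    and p_eq: "\<forall>i<n. p i = card {a. a < l \<and> x i a}"
    using p unfolding pseudocodeword_def by blast
  define N where "N = {i'. (i', j) \<in> E \<and> i' \<noteq> i}"
  define A where "A = {a. a < l \<and> x i a}"
  define B where "B = (SIGMA i':N. {a. a < l \<and> x i' a})"
  have N: "N \<subseteq> {..<n}" using edges unfolding N_def by auto
  then have "finite N" by (rule finite_subset) simp
  then have "finite B" unfolding B_def by auto
  have "\<forall>a\<in>A. \<exists>q\<in>B. \<pi> (fst q) j (snd q) = \<pi> i j a"
  proof
    fix a assume "a \<in> A"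
    then obtain i' a' where "(i', j) \<in> E" "i' \<noteq> i" "a' < l" "x i' a'" "\<pi> i' j a' = \<pi> i j a"
      using lift_codeword_partner[OF perms x ij] unfolding A_def by blast
    then show "\<exists>q\<in>B. \<pi> (fst q) j (snd q) = \<pi> i j a"
      unfolding B_def N_def by (intro bexI[of _ "(i', a')"]) auto
  qed
  then obtain \<phi> where \<phi>: "\<And>a. a \<in> A \<Longrightarrow> \<phi> a \<in> B \<and> \<pi> (fst (\<phi> a)) j (snd (\<phi> a)) = \<pi> i j a"
    by metis
  have "inj_on (\<pi> i j) A"
    using perms ij unfolding lift_perms_def bij_betw_def A_def by (auto intro: inj_on_subset)
  then have "inj_on \<phi> A"
    using \<phi> unfolding inj_on_def by metis
  then have "card A \<le> card B" using \<phi> \<open>finite B\<close> by (intro card_inj_on_le) auto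
  also have "card B = (\<Sum>i'\<in>N. p i')"
    using \<open>finite N\<close> N p_eq unfolding B_def by (simp add: card_SigmaI subset_iff)
  finally show ?thesis
    using p_eq ij edges unfolding A_def N_def by auto
qed

lemma finite_edges: "finite E"
  using edges by (rule finite_subset) simp

lemma path_end_less: "u < n \<Longrightarrow> nb_path E u c P \<Longrightarrow> path_end u P < n"
proof (induction P arbitrary: u c)
  case (Cons q P)
  then show ?case using edges by (cases q) auto
qed simp

lemma card_other_checks:
  assumes "vdeg E u = d"
  shows "card {c'. (u, c') \<in> E \<and> c' \<noteq> c} = (if (u, c) \<in> E then d - 1 else d)"
proof -
  have "finite {c'. (u, c') \<in> E}"
    using finite_edge_slices(1)[OF finite_edges] .
  moreover have "{c'. (u, c') \<in> E \<and> c' \<noteq> c} = {c'. (u, c') \<in> E} - {c}" by auto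
  ultimately show ?thesis
    using assms unfolding vdeg_def by (cases "(u, c) \<in> E") auto
qed

lemma level_sum_Suc_ge:
  assumes p: "pseudocodeword n m E p"
    and IH: "\<And>v c'. (v, c') \<in> E \<Longrightarrow> f * p v \<le> level_sum E p k v c'"
  shows "card {c'. (u, c') \<in> E \<and> c' \<noteq> c} * (f * p u) \<le> level_sum E p (Suc k) u c"
proof -
  have "card {c'. (u, c') \<in> E \<and> c' \<noteq> c} * (f * p u) =
      (\<Sum>c'\<in>{c'. (u, c') \<in> E \<and> c' \<noteq> c}. f * p u)" by simp
  also have "\<dots> \<le> (\<Sum>c'\<in>{c'. (u, c') \<in> E \<and> c' \<noteq> c}. \<Sum>v\<in>{v. (v, c') \<in> E \<and> v \<noteq> u}. f * p v)"
  proof (rule sum_mono)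
    fix c' assume "c' \<in> {c'. (u, c') \<in> E \<and> c' \<noteq> c}"
    then have "p u \<le> (\<Sum>v\<in>{v. (v, c') \<in> E \<and> v \<noteq> u}. p v)"
      using pseudocodeword_local_ineq[OF p] by simp
    then show "f * p u \<le> (\<Sum>v\<in>{v. (v, c') \<in> E \<and> v \<noteq> u}. f * p v)"
      by (simp add: sum_distrib_left[symmetric])
  qed
  also have "\<dots> \<le> (\<Sum>c'\<in>{c'. (u, c') \<in> E \<and> c' \<noteq> c}.
      \<Sum>v\<in>{v. (v, c') \<in> E \<and> v \<noteq> u}. level_sum E p k v c')"
    by (intro sum_mono IH) auto
  also have "\<dots> = level_sum E p (Suc k) u c"
    by (rule level_sum_Suc[OF finite_edges, symmetric])
  finally show ?thesis .
qed

lemma level_sum_ge: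
  assumes p: "pseudocodeword n m E p" and deg: "\<forall>i<n. vdeg E i = d"
  shows "(u, c) \<in> E \<Longrightarrow> (d - 1) ^ k * p u \<le> level_sum E p k u c"
proof (induction k arbitrary: u c)
  case (Suc k)
  have "vdeg E u = d" using deg Suc.prems edges by auto
  then have "card {c'. (u, c') \<in> E \<and> c' \<noteq> c} = d - 1"
    using card_other_checks Suc.prems by simp
  then show ?case
    using level_sum_Suc_ge[OF p Suc.IH, of u c] by (simp add: mult.assoc)
qed simp

lemma root_level_sum_ge:
  assumes p: "pseudocodeword n m E p" and deg: "\<forall>i<n. vdeg E i = d" and u: "u < n"
  shows "d * (d - 1) ^ k * p u \<le> level_sum E p (Suc k) u m"
proof -
  have "(u, m) \<notin> E" using edges by auto
  then have "card {c'. (u, c') \<in> E \<and> c' \<noteq> m} = d"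
    using card_other_checks deg u by simp
  then show ?thesis
    using level_sum_Suc_ge[OF p level_sum_ge[OF p deg], where k = k and u = u and c = m]
    by (simp add: mult.assoc)
qed

lemma tree_levels_ge:
  assumes p: "pseudocodeword n m E p" and deg: "\<forall>i<n. vdeg E i = d" and u: "u < n"
  shows "(1 + (\<Sum>k<K. d * (d - 1) ^ k)) * p u \<le> (\<Sum>k\<le>K. level_sum E p k u m)"
proof -
  have "(1 + (\<Sum>k<K. d * (d - 1) ^ k)) * p u = p u + (\<Sum>k<K. d * (d - 1) ^ k * p u)"
    by (simp add: sum_distrib_right)
  also have "\<dots> \<le> level_sum E p 0 u m + (\<Sum>k<K. level_sum E p (Suc k) u m)"
    using root_level_sum_ge[OF p deg u] by (simp add: sum_mono)
  also have "\<dots> = (\<Sum>k\<le>K. level_sum E p k u m)"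
    by (rule sum.atMost_shift[symmetric])
  finally show ?thesis .
qed

lemma sum_levels_eq_sum_ends:
  assumes G: "has_girth n m E g" and K: "4 * K < g"
  shows "(\<Sum>k\<le>K. level_sum E p k u c) = sum p (path_end u ` {P. length P \<le> K \<and> nb_path E u c P})"
proof -
  have "inj_on (path_end u) {P. length P \<le> K \<and> nb_path E u c P}"
  proof (rule inj_onI)
    fix P1 P2
    assume P: "P1 \<in> {P. length P \<le> K \<and> nb_path E u c P}" "P2 \<in> {P. length P \<le> K \<and> nb_path E u c P}"
      and same_end: "path_end u P1 = path_end u P2"
    show "P1 = P2"
    proof (rule ccontr)
      assume "P1 \<noteq> P2"
      then have "g \<le> 2 * length P1 + 2 * length P2"
        using girth_le_nb_paths_same_end[OF G _ _ _ same_end] P by blast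
      then show False using P K by simp
    qed
  qed
  then show ?thesis
    by (simp add: sum_levels_eq_sum_short_paths[OF finite_edges] sum.reindex)
qed

lemma sum_levels_le_sum:
  assumes G: "has_girth n m E g" and K: "4 * K < g" and u: "u < n"
  shows "(\<Sum>k\<le>K. level_sum E p k u c) \<le> (\<Sum>i<n. p i)"
  unfolding sum_levels_eq_sum_ends[OF G K] by (rule sum_mono2) (auto simp: path_end_less[OF u])

lemma inj_on_path_end_last_check:
  assumes G: "has_girth n m E g" and K: "4 * K + 2 < g"
  shows "inj_on (\<lambda>P. (path_end u P, fst (last P))) (nb_paths E (Suc K) u c)"
proof (rule inj_onI)
  fix P1 P2
  assume P: "P1 \<in> nb_paths E (Suc K) u c" "P2 \<in> nb_paths E (Suc K) u c"
    and same: "(path_end u P1, fst (last P1)) = (path_end u P2, fst (last P2))"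
  then have "P1 \<noteq> []" "P2 \<noteq> []" unfolding nb_paths_def by auto
  then have "last P1 = last P2"
    using same path_end_last by (metis prod.collapse prod.inject)
  show "P1 = P2"
  proof (rule ccontr)
    assume "P1 \<noteq> P2"
    then have "g \<le> 4 * length P1 - 2"
      using girth_le_nb_paths_same_last_step[OF G _ _ _ _ \<open>last P1 = last P2\<close> \<open>P1 \<noteq> []\<close>] P
      unfolding nb_paths_def by auto
    then show False using P K unfolding nb_paths_def by simp
  qed
qed

lemma last_level_le:
  assumes G: "has_girth n m E g" and K: "4 * K + 2 < g"
    and deg: "\<forall>i<n. vdeg E i = d" and u: "u < n"
  shows "level_sum E p (Suc K) u c \<le> d * sum p (path_end u ` nb_paths E (Suc K) u c)"
proof -
  define V where "V = nb_paths E (Suc K) u c"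
  define W where "W = path_end u ` V"
  define \<phi> where "\<phi> P = (path_end u P, fst (last P))" for P
  define T where "T = (SIGMA w:W. {c'. (w, c') \<in> E})"
  have V: "P \<noteq> []" "nb_path E u c P" if "P \<in> V" for P
    using that unfolding V_def nb_paths_def by auto
  have inj: "inj_on \<phi> V"
    using inj_on_path_end_last_check[OF G K] unfolding \<phi>_def V_def .
  have "\<phi> P \<in> T" if "P \<in> V" for P
  proof -
    from that have "(fst (last P), snd (last P)) \<in> set P" using V by simp
    then have "(snd (last P), fst (last P)) \<in> E" using nb_path_edges V(2)[OF \<open>P \<in> V\<close>] by blast
    then show ?thesis
      using V \<open>P \<in> V\<close> path_end_last unfolding \<phi>_def W_def T_def by auto
  qed
  then have sub: "\<phi> ` V \<subseteq> T" by blast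
  have fin_W: "finite W"
    unfolding W_def V_def using finite_nb_paths[OF finite_edges] by blast
  note fin_checks = finite_edge_slices(1)[OF finite_edges]
  have "level_sum E p (Suc K) u c = (\<Sum>x\<in>\<phi> ` V. p (fst x))"
    unfolding level_sum_def V_def[symmetric] sum.reindex[OF inj] by (simp add: \<phi>_def)
  also have "\<dots> \<le> (\<Sum>x\<in>T. p (fst x))"
    by (rule sum_mono2) (use fin_W fin_checks sub in \<open>auto simp: T_def\<close>)
  also have "\<dots> = (\<Sum>w\<in>W. \<Sum>c'\<in>{c'. (w, c') \<in> E}. p w)"
    unfolding T_def using fin_W fin_checks by (subst sum.Sigma) (auto simp: split_def)
  also have "\<dots> = (\<Sum>w\<in>W. d * p w)"
    using deg path_end_less[OF u V(2)] unfolding W_def vdeg_def by (intro sum.cong) auto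
  also have "\<dots> = d * sum p W"
    by (simp add: sum_distrib_left)
  finally show ?thesis unfolding W_def V_def .
qed

lemma sum_levels_plus_last_level_le_sum:
  assumes G: "has_girth n m E g" and K: "4 * K + 2 < g"
    and deg: "\<forall>i<n. vdeg E i = d" and u: "u < n"
  shows "d * (\<Sum>k\<le>K. level_sum E p k u c) + level_sum E p (Suc K) u c \<le> d * (\<Sum>i<n. p i)"
proof -
  define A where "A = path_end u ` {P. length P \<le> K \<and> nb_path E u c P}"
  define W where "W = path_end u ` nb_paths E (Suc K) u c"
  have disj: "A \<inter> W = {}"
  proof (rule ccontr)
    assume "A \<inter> W \<noteq> {}"
    then obtain P1 P2 where P: "length P1 \<le> K" "nb_path E u c P1" "length P2 = Suc K"
        "nb_path E u c P2" "path_end u P1 = path_end u P2"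
      unfolding A_def W_def nb_paths_def by blast
    then have "P1 \<noteq> P2" by auto
    then have "g \<le> 2 * length P1 + 2 * length P2"
      using girth_le_nb_paths_same_end[OF G P(2) P(4) _ P(5)] by blast
    then show False using P K by simp
  qed
  have fin: "finite A" "finite W"
    unfolding A_def W_def
    using finite_short_nb_paths[OF finite_edges] finite_nb_paths[OF finite_edges] by simp_all
  have sub: "A \<union> W \<subseteq> {..<n}"
    using path_end_less[OF u] unfolding A_def W_def nb_paths_def by auto
  have "d * (\<Sum>k\<le>K. level_sum E p k u c) + level_sum E p (Suc K) u c \<le> d * sum p A + d * sum p W"
    using sum_levels_eq_sum_ends[OF G, of K p u c] last_level_le[OF G K deg u, of p c] K
    unfolding A_def W_def by simp
  also have "\<dots> = d * sum p (A \<union> W)"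
    by (simp add: sum.union_disjoint[OF fin disj] distrib_left)
  also have "\<dots> \<le> d * (\<Sum>i<n. p i)"
    using sub by (intro mult_le_mono2 sum_mono2) auto
  finally show ?thesis .
qed

lemma vdeg_pos:
  assumes "has_girth n m E g" "\<forall>i<n. vdeg E i = d"
  shows "0 < d"
proof -
  obtain t where "has_cycle n m E t"
    using assms(1) unfolding has_girth_def by blast
  then obtain vs cs :: "nat \<Rightarrow> nat" where "vs 0 < n" "(vs 0, cs 0) \<in> E"
    unfolding has_cycle_def by fastforce
  then have "vs 0 < n" "cs 0 \<in> {j. (vs 0, j) \<in> E}" by auto
  moreover note finite_edge_slices(1)[OF finite_edges, of "vs 0"]
  ultimately show ?thesis
    using assms(2) card_gt_0_iff unfolding vdeg_def by blast
qed

end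

(* girth_bound in natural numbers, as the BSC weight needs an integer bound *)
definition tree_bound :: "nat \<Rightarrow> nat \<Rightarrow> nat" where
  "tree_bound d g =
    (if odd (g div 2)
     then 1 + (\<Sum>k=0..(g - 6) div 4. d * (d - 1) ^ k)
     else 1 + (\<Sum>k\<in>{0..<(g - 4) div 4}. d * (d - 1) ^ k) + (d - 1) ^ ((g - 4) div 4))"

lemma girth_bound_eq_tree_bound: "0 < d \<Longrightarrow> girth_bound d g = real (tree_bound d g)"
  unfolding girth_bound_def tree_bound_def by (simp add: of_nat_diff)

lemma tree_bound_odd: "0 < K \<Longrightarrow> tree_bound d (4 * K + 2) = 1 + (\<Sum>k<K. d * (d - 1) ^ k)"
  unfolding tree_bound_def by (cases K) (simp_all add: atLeast0AtMost lessThan_Suc_atMost)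

lemma tree_bound_even:
  "tree_bound d (4 * Suc K) = 1 + (\<Sum>k<K. d * (d - 1) ^ k) + (d - 1) ^ K"
  unfolding tree_bound_def by (simp add: atLeast0LessThan)

context tanner
begin

lemma tree_bound_mult_le_sum:
  assumes G: "has_girth n m E g" and p: "pseudocodeword n m E p"
    and deg: "\<forall>i<n. vdeg E i = d" and u: "u < n"
  shows "tree_bound d g * p u \<le> (\<Sum>i<n. p i)"
proof -
  obtain t where g: "g = 2 * t" "2 \<le> t"
    using G unfolding has_girth_def has_cycle_def by blast
  show ?thesis
  proof (cases "odd t")
    case True
    then obtain K where "t = 2 * K + 1" "0 < K" using g(2) by (elim oddE) auto
    then have "g = 4 * K + 2" using g by simp
    then show ?thesis
      using tree_levels_ge[OF p deg u, of K] sum_levels_le_sum[OF G _ u, of K p m]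
        tree_bound_odd[OF \<open>0 < K\<close>] by simp
  next
    case False
    then obtain K' where "t = 2 * K'" by blast
    moreover obtain K where "K' = Suc K" using g(2) \<open>t = 2 * K'\<close> by (cases K') auto
    ultimately have g_eq: "g = 4 * Suc K" using g by simp
    have "d * (tree_bound d g * p u) =
        d * ((1 + (\<Sum>k<K. d * (d - 1) ^ k)) * p u) + d * (d - 1) ^ K * p u"
      unfolding g_eq tree_bound_even by (simp add: algebra_simps)
    also have "\<dots> \<le> d * (\<Sum>k\<le>K. level_sum E p k u m) + level_sum E p (Suc K) u m"
      using tree_levels_ge[OF p deg u] root_level_sum_ge[OF p deg u] by (intro add_mono) simp_all
    also have "\<dots> \<le> d * (\<Sum>i<n. p i)"
      using sum_levels_plus_last_level_le_sum[OF G _ deg u] g_eq by simp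
    finally show ?thesis using vdeg_pos[OF G deg] by simp
  qed
qed

end

lemma finite_top_sums:
  fixes p :: "nat \<Rightarrow> nat"
  shows "finite {(\<Sum>i\<in>I. p i) | I. I \<subseteq> {..<n} \<and> card I = e}"
proof -
  have "{(\<Sum>i\<in>I. p i) | I. I \<subseteq> {..<n} \<and> card I = e} \<subseteq> sum p ` Pow {..<n}" by blast
  then show ?thesis by (rule finite_subset) simp
qed

lemma top_sum_le:
  assumes "e \<le> n" and max: "\<forall>i<n. p i \<le> M"
  shows "top_sum n p e \<le> e * M"
  unfolding top_sum_def
proof (rule Max.boundedI[OF finite_top_sums])
  have "(\<Sum>i<e. p i) \<in> {(\<Sum>i\<in>I. p i) | I. I \<subseteq> {..<n} \<and> card I = e}"
    using assms(1) by (intro CollectI exI[of _ "{..<e}"]) auto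
  then show "{(\<Sum>i\<in>I. p i) | I. I \<subseteq> {..<n} \<and> card I = e} \<noteq> {}" by blast
next
  fix s assume "s \<in> {(\<Sum>i\<in>I. p i) | I. I \<subseteq> {..<n} \<and> card I = e}"
  then obtain I where I: "s = (\<Sum>i\<in>I. p i)" "I \<subseteq> {..<n}" "card I = e" by blast
  then have "(\<Sum>i\<in>I. p i) \<le> (\<Sum>i\<in>I. M)" using max by (intro sum_mono) auto
  then show "s \<le> e * M" using I by simp
qed

lemma sum_le_top_sum: "(\<Sum>i<n. p i) \<le> top_sum n p n"
  unfolding top_sum_def
  by (rule Max_ge[OF finite_top_sums]) (intro CollectI exI[of _ "{..<n}"], simp)

lemma w_bsc_ge:
  fixes B M :: nat
  assumes max: "\<forall>i<n. p i \<le> M" and "0 < M" and B: "B * M \<le> (\<Sum>i<n. p i)"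
  shows "real B \<le> w_bsc n p"
proof -
  define S where "S = (\<Sum>i<n. p i)"
  define e where "e = (LEAST e. S \<le> 2 * top_sum n p e)"
  have ex: "S \<le> 2 * top_sum n p n"
    using sum_le_top_sum[where n = n and p = p] unfolding S_def by simp
  have "e \<le> n"
    unfolding e_def by (rule Least_le) (rule ex)
  then have top: "top_sum n p e \<le> e * M"
    using top_sum_le max by blast
  have S_le: "S \<le> 2 * top_sum n p e"
    unfolding e_def by (rule LeastI) (rule ex)
  have w: "w_bsc n p = (if 2 * top_sum n p e = S then real (2 * e) else real (2 * e) - 1)"
    unfolding w_bsc_def Let_def e_def S_def ..
  show ?thesis
  proof (cases "2 * top_sum n p e = S")
    case True
    then have "B * M \<le> (2 * e) * M" using B top unfolding S_def by linarith
    then have "B \<le> 2 * e" using \<open>0 < M\<close> by simp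
    then show ?thesis using w True by simp
  next
    case False
    then have "B * M < (2 * e) * M" using B top S_le unfolding S_def by linarith
    then have "B < 2 * e" by simp
    then show ?thesis using w False by simp
  qed
qed

lemma w_awgn_ge:
  fixes B M :: nat
  assumes max: "\<forall>i<n. p i \<le> M" and nz: "\<exists>i<n. p i \<noteq> 0" and B: "B * M \<le> (\<Sum>i<n. p i)"
  shows "real B \<le> w_awgn n p"
proof -
  define S where "S = (\<Sum>i<n. p i)"
  define Q where "Q = (\<Sum>i<n. (p i)\<^sup>2)"
  have "Q \<le> (\<Sum>i<n. M * p i)"
    unfolding Q_def power2_eq_square using max by (intro sum_mono mult_le_mono1) auto
  then have "Q \<le> M * S" unfolding S_def by (simp add: sum_distrib_left)
  then have "B * Q \<le> (B * M) * S" by (simp add: mult.assoc)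
  also have "\<dots> \<le> S * S" using B unfolding S_def by (rule mult_le_mono1)
  finally have "real B * real Q \<le> (real S)\<^sup>2"
    by (simp add: power2_eq_square flip: of_nat_mult)
  moreover obtain i where "i < n" "p i \<noteq> 0" using nz by blast
  then have "0 < Q"
    unfolding Q_def by (intro sum_pos2[of _ i]) auto
  ultimately have "real B \<le> (real S)\<^sup>2 / real Q"
    by (simp add: pos_le_divide_eq)
  then show ?thesis unfolding w_awgn_def S_def Q_def .
qed

theorem theorem1:
  fixes n m d dc g :: nat and E :: "(nat \<times> nat) set"
  assumes "tanner_graph n m E"
    and "\<forall>i<n. vdeg E i = d"
    and "\<forall>j<m. cdeg E j = dc"
    and "has_girth n m E g"
  shows "\<forall>p. pseudocodeword n m E p \<and> (\<exists>i<n. p i \<noteq> 0) \<longrightarrow>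
           w_bsc n p \<ge> girth_bound d g \<and> w_awgn n p \<ge> girth_bound d g"
proof (intro allI impI, elim conjE)
  fix p assume p: "pseudocodeword n m E p" and nz: "\<exists>i<n. p i \<noteq> 0"
  interpret tanner n m E
    using assms(1) unfolding tanner_graph_def by unfold_locales
  define M where "M = Max (p ` {..<n})"
  have max: "\<forall>i<n. p i \<le> M"
    unfolding M_def by simp
  obtain u where u: "u < n" "p u = M"
    using Max_in[of "p ` {..<n}"] nz unfolding M_def by fastforce
  then have "0 < M" using max nz by (metis gr0I le_zero_eq)
  have "tree_bound d g * M \<le> (\<Sum>i<n. p i)"
    using tree_bound_mult_le_sum[OF assms(4) p assms(2) u(1)] u(2) by simp
  then show "girth_bound d g \<le> w_bsc n p \<and> girth_bound d g \<le> w_awgn n p"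
    using w_bsc_ge[OF max \<open>0 < M\<close>] w_awgn_ge[OF max nz]
      girth_bound_eq_tree_bound[OF vdeg_pos[OF assms(4,2)]] by simp
qed

end
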